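(* Let $G=(V,E)$ be a graph with colouring $f:V\to\{B,R\}$. There exists an optimal solution $E'$ to the MIE problem on $(G,f)$ such that no edge of $E'\setminus E$ is incident to a red node and no edge of $E\setminus E'$ is incident to a blue node (i.e., every added edge joins two blue nodes and every removed edge joins two red nodes).
   Context: Graphs are finite, simple and undirected. A colouring $f:V\to\{B,R\}$ partitions $V$ into the blue nodes $B=f^{-1}(B)$ and red nodes $R=f^{-1}(R)$. For an edge set $E'$ on $V$ and $v\in V$, let $b_{E'}(v)$ and $r_{E'}(v)$ be the numbers of blue and red neighbours of $v$ in $(V,E')$. A node $v$ is under (majority) illusion in $(V,E')$ if $r_{E'}(v)>b_{E'}(v)$. Standing assumption: $|B|>|R|$. An optimal solution to MIE is an edge set $E'$ on $V$ such that no node is under illusion in $(V,E')$ and $|E\setminus E'|+|E'\setminus E|$ is minimum among all such sets. *)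

theory Defs
  imports Main
begin

datatype colour = Blue | Red

definition edge_set_on :: "'a set \<Rightarrow> 'a set set \<Rightarrow> bool" where
  "edge_set_on V E \<longleftrightarrow> (\<forall>e\<in>E. \<exists>u v. e = {u, v} \<and> u \<noteq> v \<and> u \<in> V \<and> v \<in> V)"

definition is_graph :: "'a set \<Rightarrow> 'a set set \<Rightarrow> bool" where
  "is_graph V E \<longleftrightarrow> finite V \<and> edge_set_on V E"

definition blue_nbrs :: "('a \<Rightarrow> colour) \<Rightarrow> 'a set set \<Rightarrow> 'a \<Rightarrow> nat" where
  "blue_nbrs f E v = card {u. {u, v} \<in> E \<and> f u = Blue}"

definition red_nbrs :: "('a \<Rightarrow> colour) \<Rightarrow> 'a set set \<Rightarrow> 'a \<Rightarrow> nat" where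
  "red_nbrs f E v = card {u. {u, v} \<in> E \<and> f u = Red}"

definition under_illusion :: "('a \<Rightarrow> colour) \<Rightarrow> 'a set set \<Rightarrow> 'a \<Rightarrow> bool" where
  "under_illusion f E v \<longleftrightarrow> red_nbrs f E v > blue_nbrs f E v"

definition mie_feasible :: "'a set \<Rightarrow> ('a \<Rightarrow> colour) \<Rightarrow> 'a set set \<Rightarrow> bool" where
  "mie_feasible V f E' \<longleftrightarrow> edge_set_on V E' \<and> (\<forall>v\<in>V. \<not> under_illusion f E' v)"

definition mie_cost :: "'a set set \<Rightarrow> 'a set set \<Rightarrow> nat" where
  "mie_cost E E' = card (E - E') + card (E' - E)"

definition mie_optimal :: "'a set \<Rightarrow> 'a set set \<Rightarrow> ('a \<Rightarrow> colour) \<Rightarrow> 'a set set \<Rightarrow> bool" where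
  "mie_optimal V E f E' \<longleftrightarrow> mie_feasible V f E' \<and>
     (\<forall>E''. mie_feasible V f E'' \<longrightarrow> mie_cost E E' \<le> mie_cost E E'')"

end

theory Submission
  imports Defs
begin

text \<open>Among the optimal solutions choose one with the fewest misplaced edits, i.e. added edges
  with a red end and removed edges with a blue end. Each misplaced edit can be undone without
  losing feasibility, at the price of at most one correctly placed edit. Deleting an added
  red--blue edge may put its red end under illusion; deleting a red--red edge at that end first
  prevents this. Restoring a removed blue--red edge may put its blue end under illusion; joining
  that end first to a non-adjacent blue node prevents this, and such a node exists because there
  are more blue than red nodes. The exchange does not increase the cost and strictly decreases
  the number of misplaced edits, so the chosen optimal solution has none.\<close>

definition coloured_nbrs :: "('a \<Rightarrow> colour) \<Rightarrow> 'a set set \<Rightarrow> 'a \<Rightarrow> colour \<Rightarrow> 'a set" where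
  "coloured_nbrs f X v c = {u. {u, v} \<in> X \<and> f u = c}"

definition blue_surplus :: "('a \<Rightarrow> colour) \<Rightarrow> 'a set set \<Rightarrow> 'a \<Rightarrow> bool" where
  "blue_surplus f X v \<longleftrightarrow> card (coloured_nbrs f X v Red) < card (coloured_nbrs f X v Blue)"

lemma under_illusion_iff_card:
  "under_illusion f X v \<longleftrightarrow> card (coloured_nbrs f X v Blue) < card (coloured_nbrs f X v Red)"
  unfolding under_illusion_def red_nbrs_def blue_nbrs_def coloured_nbrs_def ..

lemma colour_not_Blue_iff: "c \<noteq> Blue \<longleftrightarrow> c = Red"
  by (cases c) auto

lemma edge_set_on_memD:
  assumes "edge_set_on V X" "{u, v} \<in> X"
  shows "u \<in> V" "v \<in> V" "u \<noteq> v"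
  using assms unfolding edge_set_on_def by (auto simp: doubleton_eq_iff)

lemma edge_set_on_finite: "finite V \<Longrightarrow> edge_set_on V X \<Longrightarrow> finite X"
  unfolding edge_set_on_def by (rule finite_subset[of _ "Pow V"]) auto

lemma coloured_nbrs_subset:
  "edge_set_on V X \<Longrightarrow> coloured_nbrs f X v c \<subseteq> {u \<in> V. f u = c} - {v}"
  unfolding coloured_nbrs_def by (auto dest: edge_set_on_memD)

lemma finite_coloured_nbrs: "finite V \<Longrightarrow> edge_set_on V X \<Longrightarrow> finite (coloured_nbrs f X v c)"
  by (rule finite_subset[OF coloured_nbrs_subset]) auto

lemma coloured_nbrs_Diff_edge:
  "coloured_nbrs f (X - {{x, y}}) x c = coloured_nbrs f X x c - {y}"
  unfolding coloured_nbrs_def by (auto simp: doubleton_eq_iff)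

lemma coloured_nbrs_insert_edge:
  "coloured_nbrs f (insert {x, y} X) x c =
     (if f y = c then insert y (coloured_nbrs f X x c) else coloured_nbrs f X x c)"
  unfolding coloured_nbrs_def by (auto simp: doubleton_eq_iff)

lemma coloured_nbrs_change_elsewhere:
  assumes "v \<notin> {x, y}"
  shows "coloured_nbrs f (X - {{x, y}}) v c = coloured_nbrs f X v c"
    and "coloured_nbrs f (insert {x, y} X) v c = coloured_nbrs f X v c"
  using assms unfolding coloured_nbrs_def by (auto simp: doubleton_eq_iff)

lemma not_under_illusion_Diff_edge:
  assumes "finite V" "edge_set_on V X" "\<not> under_illusion f X x"
    and "f y = Blue \<Longrightarrow> blue_surplus f X x"
  shows "\<not> under_illusion f (X - {{x, y}}) x"
proof -
  have fin: "finite (coloured_nbrs f X x c)" for c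
    using assms(1,2) by (rule finite_coloured_nbrs)
  show ?thesis
  proof (cases "f y")
    case Blue
    then show ?thesis
      using assms(4) fin unfolding under_illusion_iff_card blue_surplus_def coloured_nbrs_Diff_edge
      by (auto simp: coloured_nbrs_def card_Diff_singleton_if)
  next
    case Red
    then have "coloured_nbrs f X x Blue - {y} = coloured_nbrs f X x Blue"
      unfolding coloured_nbrs_def by auto
    then show ?thesis
      using assms(3) card_Diff1_le[of "coloured_nbrs f X x Red" y]
      unfolding under_illusion_iff_card coloured_nbrs_Diff_edge by simp
  qed
qed

lemma not_under_illusion_insert_edge:
  assumes "finite V" "edge_set_on V X" "\<not> under_illusion f X x"
    and "f y = Red \<Longrightarrow> blue_surplus f X x"
  shows "\<not> under_illusion f (insert {x, y} X) x"
proof -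
  have fin: "finite (coloured_nbrs f X x c)" for c
    using assms(1,2) by (rule finite_coloured_nbrs)
  show ?thesis
  proof (cases "f y")
    case Blue
    then show ?thesis
      using assms(3) fin unfolding under_illusion_iff_card coloured_nbrs_insert_edge
      by (auto simp: card_insert_if)
  next
    case Red
    then show ?thesis
      using assms(4) fin unfolding under_illusion_iff_card blue_surplus_def coloured_nbrs_insert_edge
      by (auto simp: card_insert_if)
  qed
qed

text \<open>Deleting an edge only hurts an endpoint whose partner is blue, and adding one only hurts
  an endpoint whose partner is red; a blue surplus there absorbs the loss.\<close>

lemma mie_feasible_Diff_edge:
  assumes "finite V" "mie_feasible V f X"
    and "f y = Blue \<Longrightarrow> blue_surplus f X x" "f x = Blue \<Longrightarrow> blue_surplus f X y"
  shows "mie_feasible V f (X - {{x, y}})"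
  unfolding mie_feasible_def
proof (intro conjI ballI)
  have X: "edge_set_on V X" "\<forall>v\<in>V. \<not> under_illusion f X v"
    using assms(2) unfolding mie_feasible_def by auto
  then show "edge_set_on V (X - {{x, y}})"
    unfolding edge_set_on_def by blast
  fix v assume "v \<in> V"
  then have v: "\<not> under_illusion f X v"
    using X(2) by blast
  consider "v = x" | "v = y" | "v \<notin> {x, y}" by blast
  then show "\<not> under_illusion f (X - {{x, y}}) v"
  proof cases
    case 1
    then show ?thesis using not_under_illusion_Diff_edge[OF assms(1) X(1) v] assms(3) by blast
  next
    case 2
    then show ?thesis
      using not_under_illusion_Diff_edge[OF assms(1) X(1) v, of x] assms(4) by (simp add: insert_commute)
  next
    case 3
    then show ?thesis
      using v unfolding under_illusion_iff_card by (simp add: coloured_nbrs_change_elsewhere)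
  qed
qed

lemma mie_feasible_insert_edge:
  assumes "finite V" "mie_feasible V f X" "x \<in> V" "y \<in> V" "x \<noteq> y"
    and "f y = Red \<Longrightarrow> blue_surplus f X x" "f x = Red \<Longrightarrow> blue_surplus f X y"
  shows "mie_feasible V f (insert {x, y} X)"
  unfolding mie_feasible_def
proof (intro conjI ballI)
  have X: "edge_set_on V X" "\<forall>v\<in>V. \<not> under_illusion f X v"
    using assms(2) unfolding mie_feasible_def by auto
  then show "edge_set_on V (insert {x, y} X)"
    using assms(3-5) unfolding edge_set_on_def by blast
  fix v assume "v \<in> V"
  then have v: "\<not> under_illusion f X v"
    using X(2) by blast
  consider "v = x" | "v = y" | "v \<notin> {x, y}" by blast
  then show "\<not> under_illusion f (insert {x, y} X) v"
  proof cases
    case 1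
    then show ?thesis using not_under_illusion_insert_edge[OF assms(1) X(1) v] assms(6) by blast
  next
    case 2
    then show ?thesis
      using not_under_illusion_insert_edge[OF assms(1) X(1) v, of x] assms(7) by (simp add: insert_commute)
  next
    case 3
    then show ?thesis
      using v unfolding under_illusion_iff_card by (simp add: coloured_nbrs_change_elsewhere)
  qed
qed

lemma blue_surplus_Diff_red_edge:
  assumes "finite V" "edge_set_on V X" "\<not> under_illusion f X x" "r \<in> coloured_nbrs f X x Red"
  shows "blue_surplus f (X - {{x, r}}) x"
proof -
  have fin: "finite (coloured_nbrs f X x c)" for c
    using assms(1,2) by (rule finite_coloured_nbrs)
  have "coloured_nbrs f X x Blue - {r} = coloured_nbrs f X x Blue"
    using assms(4) unfolding coloured_nbrs_def by auto
  moreover have "card (coloured_nbrs f X x Red - {r}) < card (coloured_nbrs f X x Red)"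
    using fin assms(4) by (rule card_Diff1_less)
  ultimately show ?thesis
    using assms(3) unfolding blue_surplus_def under_illusion_iff_card coloured_nbrs_Diff_edge
    by simp
qed

lemma blue_surplus_insert_blue_edge:
  assumes "finite V" "edge_set_on V X" "\<not> under_illusion f X x"
    and "f b = Blue" "b \<notin> coloured_nbrs f X x Blue"
  shows "blue_surplus f (insert {x, b} X) x"
  using assms finite_coloured_nbrs[OF assms(1,2)]
  unfolding blue_surplus_def under_illusion_iff_card coloured_nbrs_insert_edge by simp

text \<open>An edit lying in \<open>E\<close> can only be a removal, one outside \<open>E\<close> only an addition.\<close>

definition misplaced_edit :: "('a \<Rightarrow> colour) \<Rightarrow> 'a set set \<Rightarrow> 'a set \<Rightarrow> bool" where
  "misplaced_edit f E e \<longleftrightarrow> (if e \<in> E then \<exists>v\<in>e. f v = Blue else \<exists>v\<in>e. f v = Red)"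

definition misplaced_edits :: "('a \<Rightarrow> colour) \<Rightarrow> 'a set set \<Rightarrow> 'a set set \<Rightarrow> 'a set set" where
  "misplaced_edits f E X = {e \<in> sym_diff E X. misplaced_edit f E e}"

lemma misplaced_edits_empty_iff:
  "misplaced_edits f E X = {} \<longleftrightarrow>
     (\<forall>e\<in>X - E. \<forall>v\<in>e. f v = Blue) \<and> (\<forall>e\<in>E - X. \<forall>v\<in>e. f v = Red)"
  unfolding misplaced_edits_def misplaced_edit_def
  by (auto simp flip: colour_not_Blue_iff)

lemma mie_cost_eq_card_sym_diff: "finite (sym_diff E X) \<Longrightarrow> mie_cost E X = card (sym_diff E X)"
  unfolding mie_cost_def by (subst card_Un_disjoint) auto

definition undoes_misplaced_edit ::
    "('a \<Rightarrow> colour) \<Rightarrow> 'a set set \<Rightarrow> 'a set set \<Rightarrow> 'a set set \<Rightarrow> bool" where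
  "undoes_misplaced_edit f E X Y \<longleftrightarrow>
     (\<exists>d\<in>misplaced_edits f E X. \<exists>g.
        sym_diff E Y \<subseteq> insert g (sym_diff E X - {d}) \<and> g \<notin> misplaced_edits f E Y)"

lemma undoes_misplaced_edit_cost_le:
  assumes "finite E" "finite X" "undoes_misplaced_edit f E X Y"
  shows "mie_cost E Y \<le> mie_cost E X"
proof -
  obtain d g where d: "d \<in> sym_diff E X" and Y: "sym_diff E Y \<subseteq> insert g (sym_diff E X - {d})"
    using assms(3) unfolding undoes_misplaced_edit_def misplaced_edits_def by blast
  have fin: "finite (sym_diff E X)"
    using assms(1,2) by simp
  then have "finite (sym_diff E Y)"
    using Y by (meson finite.insertI finite_Diff finite_subset)
  then have "mie_cost E Y = card (sym_diff E Y)"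
    by (rule mie_cost_eq_card_sym_diff)
  also have "\<dots> \<le> card (insert g (sym_diff E X - {d}))"
    using Y fin by (intro card_mono) auto
  also have "\<dots> \<le> Suc (card (sym_diff E X - {d}))"
    using fin by (simp add: card_insert_if)
  also have "\<dots> = card (sym_diff E X)"
    using fin d by (rule card_Suc_Diff1)
  also have "\<dots> = mie_cost E X"
    using fin by (rule mie_cost_eq_card_sym_diff[symmetric])
  finally show ?thesis .
qed

lemma undoes_misplaced_edit_card_less:
  assumes "finite E" "finite X" "undoes_misplaced_edit f E X Y"
  shows "card (misplaced_edits f E Y) < card (misplaced_edits f E X)"
proof -
  obtain d g where d: "d \<in> misplaced_edits f E X"
    and Y: "sym_diff E Y \<subseteq> insert g (sym_diff E X - {d})" "g \<notin> misplaced_edits f E Y"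
    using assms(3) unfolding undoes_misplaced_edit_def by blast
  have "finite (misplaced_edits f E X)"
    using assms(1,2) unfolding misplaced_edits_def by simp
  moreover have "misplaced_edits f E Y \<subset> misplaced_edits f E X"
    using Y d unfolding misplaced_edits_def by blast
  ultimately show ?thesis
    by (rule psubset_card_mono)
qed

lemma exists_red_nbr:
  assumes "finite V" "edge_set_on V X" "b \<in> coloured_nbrs f X v Blue" "\<not> blue_surplus f X v"
  shows "\<exists>r. r \<in> coloured_nbrs f X v Red"
proof -
  have "card (coloured_nbrs f X v Blue) > 0"
    using assms(3) finite_coloured_nbrs[OF assms(1,2)] card_gt_0_iff by blast
  then have "coloured_nbrs f X v Red \<noteq> {}"
    using assms(4) unfolding blue_surplus_def by (metis card.empty)
  then show ?thesis by blast
qed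

lemma undo_misplaced_addition:
  assumes "finite V" "mie_feasible V f X" "{r, y} \<in> X - E" "f r = Red"
  shows "\<exists>Y. mie_feasible V f Y \<and> undoes_misplaced_edit f E X Y"
proof -
  have X: "edge_set_on V X" "\<forall>v\<in>V. \<not> under_illusion f X v"
    using assms(2) unfolding mie_feasible_def by auto
  have "r \<in> V" "y \<in> V"
    using assms(3) X(1) by (auto dest: edge_set_on_memD)
  with X(2) have r: "\<not> under_illusion f X r" by blast
  have d: "{r, y} \<in> misplaced_edits f E X"
    using assms(3,4) unfolding misplaced_edits_def misplaced_edit_def by auto
  show ?thesis
  proof (cases "f y = Blue \<longrightarrow> blue_surplus f X r")
    case True
    let ?Y = "X - {{r, y}}"
    have "mie_feasible V f ?Y"
      using True assms(4) by (intro mie_feasible_Diff_edge[OF assms(1,2)]) auto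
    moreover have "undoes_misplaced_edit f E X ?Y"
      unfolding undoes_misplaced_edit_def using assms(3)
      by (intro bexI[OF _ d] exI[of _ "{r, y}"]) (auto simp: misplaced_edits_def)
    ultimately show ?thesis by blast
  next
    case False
    then have y: "f y = Blue" and no_surplus: "\<not> blue_surplus f X r" by auto
    have "y \<in> coloured_nbrs f X r Blue"
      using assms(3) y unfolding coloured_nbrs_def by (simp add: insert_commute)
    then obtain r2 where r2: "r2 \<in> coloured_nbrs f X r Red"
      using exists_red_nbr[OF assms(1) X(1) _ no_surplus] by blast
    then have "f r2 = Red"
      unfolding coloured_nbrs_def by simp
    text \<open>Deleting the red--red edge \<open>{r, r2}\<close> first gives \<open>r\<close> the surplus it needs.\<close>
    define X' where "X' = X - {{r, r2}}"
    have X': "mie_feasible V f X'"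
      unfolding X'_def using \<open>f r2 = Red\<close> assms(4)
      by (intro mie_feasible_Diff_edge[OF assms(1,2)]) auto
    have "blue_surplus f X' r"
      unfolding X'_def using X(1) r r2 by (rule blue_surplus_Diff_red_edge[OF assms(1)])
    let ?Y = "X' - {{r, y}}"
    have "mie_feasible V f ?Y"
      using \<open>blue_surplus f X' r\<close> assms(4) by (intro mie_feasible_Diff_edge[OF assms(1) X']) auto
    moreover have "undoes_misplaced_edit f E X ?Y"
      unfolding undoes_misplaced_edit_def
    proof (intro bexI[OF _ d] exI[of _ "{r, r2}"] conjI)
      show "sym_diff E ?Y \<subseteq> insert {r, r2} (sym_diff E X - {{r, y}})"
        using assms(3) unfolding X'_def by blast
      show "{r, r2} \<notin> misplaced_edits f E ?Y"
        using assms(4) \<open>f r2 = Red\<close>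
        unfolding X'_def misplaced_edits_def misplaced_edit_def by auto
    qed
    ultimately show ?thesis by blast
  qed
qed

lemma exists_blue_non_nbr:
  assumes "finite V" "edge_set_on V X" "r \<in> V" "f r = Red" "{r, b} \<notin> X"
    and "\<not> blue_surplus f X b" "card {v \<in> V. f v = Red} < card {v \<in> V. f v = Blue}"
  shows "\<exists>b2\<in>V. f b2 = Blue \<and> b2 \<noteq> b \<and> b2 \<notin> coloured_nbrs f X b Blue"
proof -
  let ?R = "{v \<in> V. f v = Red}" and ?B = "{v \<in> V. f v = Blue}"
  have fin: "finite ?R" "finite ?B"
    using assms(1) by simp_all
  have "card (coloured_nbrs f X b Blue) \<le> card (coloured_nbrs f X b Red)"
    using assms(6) unfolding blue_surplus_def by simp
  also have "\<dots> \<le> card (?R - {r})"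
    using coloured_nbrs_subset[OF assms(2), of f b Red] assms(5) fin
    by (intro card_mono) (auto simp: coloured_nbrs_def)
  also have "\<dots> < card ?R"
    using fin(1) assms(3,4) by (intro card_Diff1_less) simp_all
  also have "\<dots> \<le> card (?B - {b})"
    using assms(7) fin(2) by (auto simp: card_Diff_singleton_if)
  finally have "\<not> ?B - {b} \<subseteq> coloured_nbrs f X b Blue"
    using card_mono[OF finite_coloured_nbrs[OF assms(1,2)]] by (meson not_le)
  then show ?thesis by blast
qed

lemma undo_misplaced_removal:
  assumes "finite V" "edge_set_on V E" "mie_feasible V f X"
    and "card {v \<in> V. f v = Red} < card {v \<in> V. f v = Blue}"
    and "{b, y} \<in> E - X" "f b = Blue"
  shows "\<exists>Y. mie_feasible V f Y \<and> undoes_misplaced_edit f E X Y"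
proof -
  have X: "edge_set_on V X" "\<forall>v\<in>V. \<not> under_illusion f X v"
    using assms(3) unfolding mie_feasible_def by auto
  have bV: "b \<in> V" "y \<in> V" "b \<noteq> y"
    using assms(5) edge_set_on_memD[OF assms(2)] by auto
  with X(2) have b: "\<not> under_illusion f X b" by blast
  have d: "{b, y} \<in> misplaced_edits f E X"
    using assms(5,6) unfolding misplaced_edits_def misplaced_edit_def by auto
  show ?thesis
  proof (cases "f y = Red \<longrightarrow> blue_surplus f X b")
    case True
    let ?Y = "insert {b, y} X"
    have "mie_feasible V f ?Y"
      using True assms(6) by (intro mie_feasible_insert_edge[OF assms(1,3) bV]) auto
    moreover have "undoes_misplaced_edit f E X ?Y"
      unfolding undoes_misplaced_edit_def
      using assms(5) by (intro bexI[OF _ d] exI[of _ "{b, y}"]) (auto simp: misplaced_edits_def)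
    ultimately show ?thesis by blast
  next
    case False
    then have y: "f y = Red" and no_surplus: "\<not> blue_surplus f X b" by auto
    have "{y, b} \<notin> X"
      using assms(5) by (simp add: insert_commute)
    then obtain b2 where b2: "b2 \<in> V" "f b2 = Blue" "b2 \<noteq> b" "b2 \<notin> coloured_nbrs f X b Blue"
      using exists_blue_non_nbr[OF assms(1) X(1) bV(2) y _ no_surplus assms(4)] by blast
    text \<open>Adding the blue--blue edge \<open>{b, b2}\<close> first gives \<open>b\<close> the surplus it needs.\<close>
    define X' where "X' = insert {b, b2} X"
    have X': "mie_feasible V f X'"
      unfolding X'_def using b2(2,3) assms(6)
      by (intro mie_feasible_insert_edge[OF assms(1,3) bV(1) b2(1)]) auto
    have "blue_surplus f X' b"
      unfolding X'_def using X(1) b b2(2,4) by (rule blue_surplus_insert_blue_edge[OF assms(1)])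
    let ?Y = "insert {b, y} X'"
    have "mie_feasible V f ?Y"
      using \<open>blue_surplus f X' b\<close> assms(6) by (intro mie_feasible_insert_edge[OF assms(1) X' bV]) auto
    moreover have "undoes_misplaced_edit f E X ?Y"
      unfolding undoes_misplaced_edit_def
    proof (intro bexI[OF _ d] exI[of _ "{b, b2}"] conjI)
      show "sym_diff E ?Y \<subseteq> insert {b, b2} (sym_diff E X - {{b, y}})"
        using assms(5) unfolding X'_def by blast
      show "{b, b2} \<notin> misplaced_edits f E ?Y"
        using assms(6) b2(2) unfolding X'_def misplaced_edits_def misplaced_edit_def by auto
    qed
    ultimately show ?thesis by blast
  qed
qed

lemma exists_undo_misplaced_edit:
  assumes "finite V" "edge_set_on V E" "mie_feasible V f X"
    and "card {v \<in> V. f v = Red} < card {v \<in> V. f v = Blue}"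
    and "misplaced_edits f E X \<noteq> {}"
  shows "\<exists>Y. mie_feasible V f Y \<and> undoes_misplaced_edit f E X Y"
proof -
  have X: "edge_set_on V X"
    using assms(3) unfolding mie_feasible_def by blast
  have other_end: "\<exists>y. e = {v, y}" if "edge_set_on V S" "e \<in> S" "v \<in> e" for S e v
    using that unfolding edge_set_on_def by (auto simp: insert_commute)
  obtain d where "d \<in> misplaced_edits f E X"
    using assms(5) by blast
  then consider (added) v where "d \<in> X - E" "v \<in> d" "f v = Red"
    | (removed) v where "d \<in> E - X" "v \<in> d" "f v = Blue"
    unfolding misplaced_edits_def misplaced_edit_def by (auto split: if_splits)
  then show ?thesis
  proof cases
    case added
    with other_end[OF X] obtain y where "d = {v, y}" by blast
    with added show ?thesis using undo_misplaced_addition[OF assms(1,3)] by blast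
  next
    case removed
    with other_end[OF assms(2)] obtain y where "d = {v, y}" by blast
    with removed show ?thesis using undo_misplaced_removal[OF assms(1-4)] by blast
  qed
qed

lemma exists_mie_optimal: "finite V \<Longrightarrow> \<exists>X. mie_optimal V E f X"
proof -
  have "mie_feasible V f {}"
    unfolding mie_feasible_def edge_set_on_def under_illusion_iff_card coloured_nbrs_def by simp
  then show ?thesis
    unfolding mie_optimal_def using ex_has_least_nat[of "mie_feasible V f" "{}" "mie_cost E"] by blast
qed

lemma mie_optimal_if_cost_le:
  assumes "mie_optimal V E f X" "mie_feasible V f Y" "mie_cost E Y \<le> mie_cost E X"
  shows "mie_optimal V E f Y"
  using assms unfolding mie_optimal_def by (auto intro: order.trans)

theorem mainTheorem5:
  fixes V :: "'a set" and E :: "'a set set" and f :: "'a \<Rightarrow> colour"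
  assumes "is_graph V E"
    and "card {v\<in>V. f v = Blue} > card {v\<in>V. f v = Red}"
  shows "\<exists>E'. mie_optimal V E f E' \<and>
           (\<forall>e\<in>E' - E. \<forall>v\<in>e. f v = Blue) \<and>
           (\<forall>e\<in>E - E'. \<forall>v\<in>e. f v = Red)"
proof -
  have V: "finite V" and E: "edge_set_on V E"
    using assms(1) unfolding is_graph_def by auto
  obtain X where opt: "mie_optimal V E f X"
    and fewest: "\<And>Z. mie_optimal V E f Z \<Longrightarrow> card (misplaced_edits f E X) \<le> card (misplaced_edits f E Z)"
    using exists_mie_optimal[OF V] ex_has_least_nat[of "mie_optimal V E f" _ "card \<circ> misplaced_edits f E"]
    by (metis comp_apply)
  have feasible: "mie_feasible V f X" and fin: "finite E" "finite X"
    using opt V E edge_set_on_finite unfolding mie_optimal_def mie_feasible_def by blast+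
  have "misplaced_edits f E X = {}"
  proof (rule ccontr)
    assume "misplaced_edits f E X \<noteq> {}"
    with exists_undo_misplaced_edit[OF V E feasible assms(2)]
    obtain Y where Y: "mie_feasible V f Y" "undoes_misplaced_edit f E X Y"
      by auto
    have "mie_optimal V E f Y"
      using opt Y(1) undoes_misplaced_edit_cost_le[OF fin Y(2)] by (rule mie_optimal_if_cost_le)
    then show False
      using fewest undoes_misplaced_edit_card_less[OF fin Y(2)] by (simp add: not_le[symmetric])
  qed
  with opt show ?thesis
    unfolding misplaced_edits_empty_iff by blast
qed

end
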